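(* Let $s\in(0,1)$, $N>2s$, $1<p<\frac{N+2s}{N-2s}$, let $a$ satisfy $a(x)\in(0,1]$ for all $x$, $\inf a>0$, $|\{a\neq1\}|>0$, $a(x)\to1$ as $|x|\to\infty$, and let $f\in H^{-s}(\mathbb R^N)$ be a nonnegative functional. Then: (i) for all $u\in H^s(\mathbb R^N)$ and $\varepsilon\in(0,1)$, $$(1-\varepsilon)I_{\frac{a}{1-\varepsilon},0}(u)-\tfrac1{2\varepsilon}\|f\|_{H^{-s}}^2\le I_{a,f}(u)\le(1+\varepsilon)I_{\frac{a}{1+\varepsilon},0}(u)+\tfrac1{2\varepsilon}\|f\|_{H^{-s}}^2;$$ (ii) for all $v\in\tilde\Sigma_+$ and $\varepsilon\in(0,1)$, $$(1-\varepsilon)^{\frac{p+1}{p-1}}J_{a,0}(v)-\tfrac1{2\varepsilon}\|f\|_{H^{-s}}^2\le J_{a,f}(v)\le(1+\varepsilon)^{\frac{p+1}{p-1}}J_{a,0}(v)+\tfrac1{2\varepsilon}\|f\|_{H^{-s}}^2;$$ (iii) there exists $d_0>0$ such that if $\|f\|_{H^{-s}}\le d_0$ then $\inf_{v\in\tilde\Sigma_+}J_{a,f}(v)>0$.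
   Context: $\|u\|_{H^s}^2=\int_{\mathbb R^N}|u|^2+\iint_{\mathbb R^{2N}}\frac{|u(x)-u(y)|^2}{|x-y|^{N+2s}}dx\,dy$; $\langle\cdot,\cdot\rangle$ is the $H^{-s}$–$H^s$ duality; $f$ nonnegative means $\langle f,u\rangle\ge0$ for all nonnegative $u$. For $b\in L^\infty$, $g\in H^{-s}$: $I_{b,g}(u)=\frac12\|u\|_{H^s}^2-\frac1{p+1}\int_{\mathbb R^N}b(x)u_+^{p+1}dx-\langle g,u\rangle$, $u_+=\max\{u,0\}$. $\tilde\Sigma_+:=\{u\in H^s:\|u\|_{H^s}=1,\ u_+\not\equiv0\}$ and $J_{b,g}(v):=\max_{t>0}I_{b,g}(tv)$ for $v\in\tilde\Sigma_+$. *)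

theory Defs
  imports "HOL-Analysis.Analysis"
begin

definition hs_norm_sq :: "real \<Rightarrow> ('a::euclidean_space \<Rightarrow> real) \<Rightarrow> ennreal" where
  "hs_norm_sq s u =
     (\<integral>\<^sup>+ x. ennreal ((u x)\<^sup>2) \<partial>lborel)
   + (\<integral>\<^sup>+ z. ennreal ((u (fst z) - u (snd z))\<^sup>2
          / norm (fst z - snd z) powr (real DIM('a) + 2 * s)) \<partial>(lborel \<Otimes>\<^sub>M lborel))"

definition Hs :: "real \<Rightarrow> ('a::euclidean_space \<Rightarrow> real) set" where
  "Hs s = {u. u \<in> borel_measurable lborel \<and> hs_norm_sq s u < \<infinity>}"

definition hs_norm :: "real \<Rightarrow> ('a::euclidean_space \<Rightarrow> real) \<Rightarrow> real" where
  "hs_norm s u = sqrt (enn2real (hs_norm_sq s u))"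

text \<open>H^{-s}: bounded linear functionals on H^s (only their values on H^s matter).\<close>

definition Hminus :: "real \<Rightarrow> (('a::euclidean_space \<Rightarrow> real) \<Rightarrow> real) set" where
  "Hminus s = {g. (\<forall>u\<in>Hs s. \<forall>v\<in>Hs s. g (\<lambda>x. u x + v x) = g u + g v)
               \<and> (\<forall>u\<in>Hs s. \<forall>c::real. g (\<lambda>x. c * u x) = c * g u)
               \<and> (\<exists>C. \<forall>u\<in>Hs s. \<bar>g u\<bar> \<le> C * hs_norm s u)}"

definition hminus_norm :: "real \<Rightarrow> (('a::euclidean_space \<Rightarrow> real) \<Rightarrow> real) \<Rightarrow> real" where
  "hminus_norm s g = Sup {\<bar>g u\<bar> | u. u \<in> Hs s \<and> hs_norm s u \<le> 1}"

definition nonneg_functional :: "real \<Rightarrow> (('a::euclidean_space \<Rightarrow> real) \<Rightarrow> real) \<Rightarrow> bool" where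
  "nonneg_functional s g \<longleftrightarrow> (\<forall>u\<in>Hs s. (\<forall>x. u x \<ge> 0) \<longrightarrow> g u \<ge> 0)"

definition I_fun :: "real \<Rightarrow> real \<Rightarrow> ('a::euclidean_space \<Rightarrow> real)
     \<Rightarrow> (('a \<Rightarrow> real) \<Rightarrow> real) \<Rightarrow> ('a \<Rightarrow> real) \<Rightarrow> real" where
  "I_fun s p b g u = (1/2) * (hs_norm s u)\<^sup>2
      - (1 / (p + 1)) * (\<integral>x. b x * (max (u x) 0) powr (p + 1) \<partial>lborel)
      - g u"

definition Sigma_plus :: "real \<Rightarrow> ('a::euclidean_space \<Rightarrow> real) set" where
  "Sigma_plus s = {u \<in> Hs s. hs_norm s u = 1 \<and> \<not> (AE x in lborel. max (u x) 0 = 0)}"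

text \<open>J_{b,g}(v) = max_{t>0} I_{b,g}(t v), written as a supremum.\<close>

definition J_fun :: "real \<Rightarrow> real \<Rightarrow> ('a::euclidean_space \<Rightarrow> real)
     \<Rightarrow> (('a \<Rightarrow> real) \<Rightarrow> real) \<Rightarrow> ('a \<Rightarrow> real) \<Rightarrow> real" where
  "J_fun s p b g v = (SUP t\<in>{0<..}. I_fun s p b g (\<lambda>x. t * v x))"

end

theory Submission
  imports Defs
begin

text \<open>For \<open>\<parallel>v\<parallel> = 1\<close> and \<open>A = \<integral> b v\<^sub>+\<^bsup>p+1\<^esup>\<close> the function
  \<open>t \<mapsto> I\<^bsub>b,0\<^esub>(t v) = t\<^sup>2/2 - t\<^bsup>p+1\<^esup> A/(p+1)\<close> has the explicit maximum \<open>ray_sup (p+1) A\<close>,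
  a multiple of \<open>A\<^bsup>-2/(p-1)\<^esup>\<close>, so dividing the weight by \<open>1 \<plusminus> \<epsilon>\<close> multiplies it by
  \<open>(1 \<plusminus> \<epsilon>)\<^bsup>(p+1)/(p-1)\<^esup>\<close>. Part (i) is the estimate
  \<open>|f u| \<le> \<parallel>f\<parallel> \<parallel>u\<parallel> \<le> \<epsilon> \<parallel>u\<parallel>\<^sup>2/2 + \<parallel>f\<parallel>\<^sup>2/(2\<epsilon>)\<close>; applied along rays it gives (ii).

  For (iii), a subcritical Sobolev bound \<open>\<integral> v\<^sub>+\<^bsup>p+1\<^esup> \<le> S\<close> on the unit ball of \<open>H\<^sup>s\<close> bounds
  \<open>A\<close> from above, hence \<open>J\<^bsub>a,0\<^esub>\<close> from below uniformly on \<open>\<Sigma>\<^sub>+\<close>, and (ii) with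
  \<open>\<epsilon> = 1/2\<close> absorbs a small \<open>f\<close>. The Sobolev bound comes from a De Giorgi type iteration:
  bounding the Gagliardo integral from below by superlevel sets gives
  \<open>|{u > 2\<^bsup>k+1\<^esup>}| \<le> K 4\<^bsup>-k\<^esup> |{u > 2\<^sup>k}|\<^bsup>2s/N\<^esup>\<close>, which forces \<open>|{u > 2\<^sup>k}|\<close> to decay
  faster than \<open>2\<^bsup>-(p+1)k\<^esup>\<close>.

  The same bound is what makes \<open>A\<close> a genuine integral (a non-integrable function has Bochner
  integral \<open>0\<close>) and the supremum defining \<open>J\<close> finite. \<open>\<Sigma>\<^sub>+\<close> is nonempty because it
  contains a normalised tent function.\<close>

section \<open>Scaling and the dual norm\<close>

lemma hs_norm_sq_scale:
  fixes u :: "'a::euclidean_space \<Rightarrow> real"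
  assumes [measurable]: "u \<in> borel_measurable lborel"
  shows "hs_norm_sq s (\<lambda>x. c * u x) = ennreal (c\<^sup>2) * hs_norm_sq s u"
proof -
  have L2: "(\<integral>\<^sup>+ x. ennreal ((c * u x)\<^sup>2) \<partial>lborel)
      = ennreal (c\<^sup>2) * (\<integral>\<^sup>+ x. ennreal ((u x)\<^sup>2) \<partial>lborel)"
    by (subst nn_integral_cmult[symmetric]) (auto simp: ennreal_mult[symmetric] power_mult_distrib)
  have Gagliardo: "(\<integral>\<^sup>+ z. ennreal ((c * u (fst z) - c * u (snd z))\<^sup>2
          / norm (fst z - snd z) powr (real DIM('a) + 2 * s)) \<partial>(lborel \<Otimes>\<^sub>M lborel))
     = ennreal (c\<^sup>2) * (\<integral>\<^sup>+ z. ennreal ((u (fst z) - u (snd z))\<^sup>2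
          / norm (fst z - snd z) powr (real DIM('a) + 2 * s)) \<partial>(lborel \<Otimes>\<^sub>M lborel))"
    by (subst nn_integral_cmult[symmetric], measurable, intro nn_integral_cong)
      (simp add: ennreal_mult[symmetric] power_mult_distrib right_diff_distrib[symmetric])
  show ?thesis
    unfolding hs_norm_sq_def L2 Gagliardo by (simp add: distrib_left)
qed

lemma Hs_scale: "u \<in> Hs s \<Longrightarrow> (\<lambda>x. c * u x) \<in> Hs s"
  unfolding Hs_def using hs_norm_sq_scale[of u s c] by (auto simp: ennreal_mult_less_top)

lemma hs_norm_scale: "u \<in> Hs s \<Longrightarrow> hs_norm s (\<lambda>x. c * u x) = \<bar>c\<bar> * hs_norm s u"
  unfolding hs_norm_def using hs_norm_sq_scale[of u s c]
  by (auto simp: Hs_def enn2real_mult real_sqrt_mult)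

lemma zero_in_Hs: "(\<lambda>x. 0) \<in> Hs s"
  unfolding Hs_def hs_norm_sq_def by simp

lemma hs_norm_nonneg: "hs_norm s u \<ge> 0"
  unfolding hs_norm_def by simp

lemma hs_norm_sq_eq_1:
  assumes "u \<in> Hs s" "hs_norm s u = 1"
  shows "hs_norm_sq s u = 1"
proof -
  have "hs_norm_sq s u = ennreal (enn2real (hs_norm_sq s u))"
    using assms(1) unfolding Hs_def by simp
  moreover have "enn2real (hs_norm_sq s u) = 1"
    using assms(2) unfolding hs_norm_def by simp
  ultimately show ?thesis by simp
qed

lemma zero_in_Hminus: "(\<lambda>_. 0) \<in> Hminus s"
  unfolding Hminus_def by (auto intro!: exI[of _ 0])

lemma Hminus_scale: "g \<in> Hminus s \<Longrightarrow> u \<in> Hs s \<Longrightarrow> g (\<lambda>x. c * u x) = c * g u"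
  unfolding Hminus_def by blast

lemma bdd_above_Hminus_unit_ball:
  assumes "g \<in> Hminus s"
  shows "bdd_above {\<bar>g w\<bar> | w. w \<in> Hs s \<and> hs_norm s w \<le> 1}"
proof -
  obtain C where C: "\<forall>w\<in>Hs s. \<bar>g w\<bar> \<le> C * hs_norm s w"
    using assms unfolding Hminus_def by blast
  have "\<bar>g w\<bar> \<le> max C 0" if w: "w \<in> Hs s" "hs_norm s w \<le> 1" for w
  proof -
    have "\<bar>g w\<bar> \<le> max C 0 * hs_norm s w"
      using C w by (auto intro: order_trans[OF _ mult_right_mono] simp: hs_norm_nonneg)
    also have "\<dots> \<le> max C 0"
      using w(2) by (intro mult_left_le) (auto simp: hs_norm_nonneg)
    finally show ?thesis .
  qed
  then show ?thesis
    by (intro bdd_aboveI) blast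
qed

lemma hminus_norm_nonneg:
  assumes "g \<in> Hminus s"
  shows "hminus_norm s g \<ge> 0"
proof -
  have "\<bar>g (\<lambda>x. 0)\<bar> \<in> {\<bar>g w\<bar> | w. w \<in> Hs s \<and> hs_norm s w \<le> 1}"
    using zero_in_Hs[of s] by (auto simp: hs_norm_def hs_norm_sq_def intro!: exI[of _ "\<lambda>x. 0"])
  then show ?thesis
    unfolding hminus_norm_def
    by (rule order_trans[OF abs_ge_zero cSup_upper[OF _ bdd_above_Hminus_unit_ball[OF assms]]])
qed

lemma hminus_norm_bound:
  assumes g: "g \<in> Hminus s" and u: "u \<in> Hs s"
  shows "\<bar>g u\<bar> \<le> hminus_norm s g * hs_norm s u"
proof (cases "hs_norm s u = 0")
  case True
  obtain C where "\<forall>w\<in>Hs s. \<bar>g w\<bar> \<le> C * hs_norm s w"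
    using g unfolding Hminus_def by blast
  then show ?thesis
    using True u hminus_norm_nonneg[OF g] by auto
next
  case False
  then have pos: "hs_norm s u > 0"
    using hs_norm_nonneg[of s u] by simp
  define w where "w = (\<lambda>x. (1 / hs_norm s u) * u x)"
  have "w \<in> Hs s" "hs_norm s w = 1"
    unfolding w_def using Hs_scale[OF u, of "1 / hs_norm s u"]
      hs_norm_scale[OF u, of "1 / hs_norm s u"] pos
    by (auto simp del: divide_const_simps)
  then have "\<bar>g w\<bar> \<le> hminus_norm s g"
    unfolding hminus_norm_def using bdd_above_Hminus_unit_ball[OF g] by (intro cSup_upper) auto
  moreover have "g w = g u / hs_norm s u"
    unfolding w_def using Hminus_scale[OF g u, of "1 / hs_norm s u"]
    by (simp del: divide_const_simps)
  ultimately show ?thesis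
    using pos by (simp add: divide_le_eq mult.commute)
qed

lemma mult_le_weighted_squares:
  fixes x y e :: real
  assumes "e > 0"
  shows "x * y \<le> e / 2 * y\<^sup>2 + 1 / (2 * e) * x\<^sup>2"
proof -
  have "0 \<le> (e * y - x)\<^sup>2" by simp
  then have "2 * e * (x * y) \<le> 2 * e * (e / 2 * y\<^sup>2 + 1 / (2 * e) * x\<^sup>2)"
    using assms by (simp add: power2_eq_square algebra_simps)
  then show ?thesis using assms by simp
qed

definition pos_power_integral :: "('a::euclidean_space \<Rightarrow> real) \<Rightarrow> real \<Rightarrow> ('a \<Rightarrow> real) \<Rightarrow> real" where
  "pos_power_integral b q u = (\<integral>x. b x * (max (u x) 0) powr q \<partial>lborel)"

lemma I_fun_eq:
  "I_fun s p b g u = 1/2 * (hs_norm s u)\<^sup>2 - 1/(p+1) * pos_power_integral b (p + 1) u - g u"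
  unfolding I_fun_def pos_power_integral_def ..

lemma pos_power_integral_weight_divide:
  "pos_power_integral (\<lambda>x. b x / c) q u = pos_power_integral b q u / c"
proof -
  have "(\<lambda>x. b x / c * max (u x) 0 powr q) = (\<lambda>x. b x * max (u x) 0 powr q / c)"
    by auto
  then show ?thesis
    unfolding pos_power_integral_def by simp
qed

lemma I_fun_bounds:
  assumes g: "g \<in> Hminus s" and u: "u \<in> Hs s" and e: "0 < e" "e < 1"
  shows "(1 - e) * I_fun s p (\<lambda>x. b x / (1 - e)) (\<lambda>_. 0) u
          - 1 / (2 * e) * (hminus_norm s g)\<^sup>2 \<le> I_fun s p b g u"
    and "I_fun s p b g u \<le> (1 + e) * I_fun s p (\<lambda>x. b x / (1 + e)) (\<lambda>_. 0) u
          + 1 / (2 * e) * (hminus_norm s g)\<^sup>2"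
proof -
  define Q where "Q = pos_power_integral b (p + 1) u"
  have "\<bar>g u\<bar> \<le> hminus_norm s g * hs_norm s u"
    by (rule hminus_norm_bound[OF g u])
  also have "\<dots> \<le> e / 2 * (hs_norm s u)\<^sup>2 + 1 / (2 * e) * (hminus_norm s g)\<^sup>2"
    by (rule mult_le_weighted_squares[OF e(1)])
  finally have gu: "\<bar>g u\<bar> \<le> e / 2 * (hs_norm s u)\<^sup>2 + 1 / (2 * e) * (hminus_norm s g)\<^sup>2" .
  have I: "I_fun s p b g u = 1/2 * (hs_norm s u)\<^sup>2 - 1/(p+1) * Q - g u"
    unfolding I_fun_eq Q_def ..
  have "(1 + c) * I_fun s p (\<lambda>x. b x / (1 + c)) (\<lambda>_. 0) u
      = 1/2 * (hs_norm s u)\<^sup>2 + c / 2 * (hs_norm s u)\<^sup>2 - 1/(p+1) * Q" if "1 + c \<noteq> 0" for c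
  proof -
    have "(1 + c) * (1/(p+1) * (Q / (1 + c))) = 1/(p+1) * Q" using that by simp
    then show ?thesis
      unfolding I_fun_eq pos_power_integral_weight_divide Q_def[symmetric] right_diff_distrib
      by (simp add: algebra_simps)
  qed
  from this[of e] this[of "- e"] e show
    "(1 - e) * I_fun s p (\<lambda>x. b x / (1 - e)) (\<lambda>_. 0) u
          - 1 / (2 * e) * (hminus_norm s g)\<^sup>2 \<le> I_fun s p b g u"
    "I_fun s p b g u \<le> (1 + e) * I_fun s p (\<lambda>x. b x / (1 + e)) (\<lambda>_. 0) u
          + 1 / (2 * e) * (hminus_norm s g)\<^sup>2"
    unfolding I using gu by auto
qed

section \<open>Maximisation along rays\<close>

lemma pos_power_integral_scale:
  assumes "t \<ge> 0"
  shows "pos_power_integral b q (\<lambda>x. t * u x) = t powr q * pos_power_integral b q u"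
proof -
  have "max (t * y) 0 = t * max y 0" for y
    using assms by (simp add: max_def mult_le_0_iff)
  then have "(\<lambda>x. b x * max (t * u x) 0 powr q) = (\<lambda>x. t powr q * (b x * max (u x) 0 powr q))"
    using assms by (auto simp: powr_mult)
  then show ?thesis
    unfolding pos_power_integral_def by simp
qed

lemma I_fun_ray:
  assumes "g \<in> Hminus s" "v \<in> Hs s" "t \<ge> 0"
  shows "I_fun s p b g (\<lambda>x. t * v x) = t\<^sup>2 / 2 * (hs_norm s v)\<^sup>2
     - t powr (p + 1) / (p + 1) * pos_power_integral b (p + 1) v - t * g v"
  unfolding I_fun_eq pos_power_integral_scale[OF assms(3)] hs_norm_scale[OF assms(2)]
    Hminus_scale[OF assms(1,2)]
  using assms(3) by (simp add: power_mult_distrib)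

definition ray_sup :: "real \<Rightarrow> real \<Rightarrow> real" where
  "ray_sup q B = (1/2 - 1/q) * B powr (- 2 / (q - 2))"

lemma ray_sup_upper:
  fixes t B q :: real
  assumes t: "t > 0" and B: "B > 0" and q: "q > 2"
  shows "t\<^sup>2 / 2 - t powr q / q * B \<le> ray_sup q B"
proof -
  have P: "q / 2 > 1" and Q: "q / (q - 2) > 1" and PQ: "1 / (q / 2) + 1 / (q / (q - 2)) = 1"
    using q by (auto simp: field_simps)
  define x where "x = t powr 2 * B powr (2 / q)"
  define y where "y = B powr (- 2 / q)"
  have xy: "x * y = t\<^sup>2"
    unfolding x_def y_def using t B by (simp add: powr_add[symmetric] powr_realpow)
  have xP: "x powr (q / 2) = t powr q * B"
  proof -
    have "x powr (q / 2) = (t powr 2) powr (q / 2) * (B powr (2 / q)) powr (q / 2)"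
      unfolding x_def using t B by (subst powr_mult) auto
    also have "\<dots> = t powr q * B"
      using B q by (simp only: powr_powr) simp
    finally show ?thesis .
  qed
  have yQ: "y powr (q / (q - 2)) = B powr (- 2 / (q - 2))"
    unfolding y_def using B q by (simp add: powr_powr)
  have "x * y \<le> x powr (q / 2) / (q / 2) + y powr (q / (q - 2)) / (q / (q - 2))"
    by (rule Youngs_inequality[OF P Q PQ]) (auto simp: x_def y_def)
  then have "t\<^sup>2 \<le> t powr q * B * (2 / q) + B powr (- 2 / (q - 2)) * ((q - 2) / q)"
    unfolding xy xP yQ by simp
  then have young: "t\<^sup>2 - t powr q * B * (2 / q) \<le> B powr (- 2 / (q - 2)) * ((q - 2) / q)"
    by linarith
  have "t\<^sup>2 / 2 - t powr q / q * B = (t\<^sup>2 - t powr q * B * (2 / q)) / 2"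
    by (simp add: field_simps)
  also have "\<dots> \<le> B powr (- 2 / (q - 2)) * ((q - 2) / q) / 2"
    using young by simp
  also have "\<dots> = ray_sup q B"
    unfolding ray_sup_def using q by (simp add: field_simps)
  finally show ?thesis .
qed

lemma ray_sup_attained:
  fixes B q :: real
  assumes B: "B > 0" and q: "q > 2"
  shows "\<exists>t>0. t\<^sup>2 / 2 - t powr q / q * B = ray_sup q B"
proof (intro exI conjI)
  define t where "t = B powr (- 1 / (q - 2))"
  show "t > 0"
    unfolding t_def using B by simp
  have t2: "t\<^sup>2 = B powr (- 2 / (q - 2))"
    unfolding t_def using B by (simp add: powr_realpow[symmetric] powr_powr)
  have "t powr q * B = B powr (- q / (q - 2)) * B powr 1"
    unfolding t_def using B by (simp add: powr_powr)
  also have "\<dots> = B powr (- q / (q - 2) + 1)"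
    by (rule powr_add[symmetric])
  also have "- q / (q - 2) + 1 = - 2 / (q - 2)"
    using q by (simp add: field_simps)
  finally show "t\<^sup>2 / 2 - t powr q / q * B = ray_sup q B"
    unfolding ray_sup_def t2 by (simp add: algebra_simps)
qed

lemma ray_sup_scale:
  assumes B: "B > 0" and c: "c > 0" and q: "q > 2"
  shows "c * ray_sup q (B / c) = c powr (q / (q - 2)) * ray_sup q B"
proof -
  have "c * (B / c) powr (- 2 / (q - 2)) = c powr 1 * c powr (2 / (q - 2)) * B powr (- 2 / (q - 2))"
    using B c by (simp add: powr_divide powr_minus divide_simps)
  also have "\<dots> = c powr (1 + 2 / (q - 2)) * B powr (- 2 / (q - 2))"
    by (simp only: powr_add)
  also have "1 + 2 / (q - 2) = q / (q - 2)"
    using q by (simp add: field_simps)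
  finally show ?thesis
    unfolding ray_sup_def by (simp add: ac_simps)
qed

lemma ray_sup_pos: "B > 0 \<Longrightarrow> q > 2 \<Longrightarrow> ray_sup q B > 0"
  unfolding ray_sup_def by simp

lemma ray_sup_antimono:
  assumes "0 < B" "B \<le> B'" "q > 2"
  shows "ray_sup q B' \<le> ray_sup q B"
  unfolding ray_sup_def using assms by (intro mult_left_mono powr_mono2') auto

lemma I_fun_ray_unit:
  assumes "v \<in> Hs s" "hs_norm s v = 1" "t \<ge> 0"
  shows "I_fun s p (\<lambda>x. b x / c) (\<lambda>_. 0) (\<lambda>x. t * v x)
     = t\<^sup>2 / 2 - t powr (p + 1) / (p + 1) * (pos_power_integral b (p + 1) v / c)"
  using I_fun_ray[OF zero_in_Hminus assms(1,3), of p "\<lambda>x. b x / c"] assms(2)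
  by (simp add: pos_power_integral_weight_divide)

lemma J_fun_zero_eq:
  assumes v: "v \<in> Hs s" "hs_norm s v = 1" and p: "p > 1"
    and A: "pos_power_integral b (p + 1) v > 0"
  shows "J_fun s p b (\<lambda>_. 0) v = ray_sup (p + 1) (pos_power_integral b (p + 1) v)"
proof -
  have q: "p + 1 > 2" using p by simp
  have ray: "I_fun s p b (\<lambda>_. 0) (\<lambda>x. t * v x)
      = t\<^sup>2 / 2 - t powr (p + 1) / (p + 1) * pos_power_integral b (p + 1) v" if "t \<ge> 0" for t
    using I_fun_ray_unit[OF v that, of p b 1] by simp
  obtain t0 where "t0 > 0"
    "t0\<^sup>2 / 2 - t0 powr (p + 1) / (p + 1) * pos_power_integral b (p + 1) v
       = ray_sup (p + 1) (pos_power_integral b (p + 1) v)"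
    using ray_sup_attained[OF A q] by blast
  then show ?thesis
    unfolding J_fun_def using ray ray_sup_upper[OF _ A q]
    by (intro cSup_eq_maximum) (auto intro!: image_eqI[of _ _ t0])
qed

lemma I_fun_ray_upper:
  assumes g: "g \<in> Hminus s" and v: "v \<in> Hs s" "hs_norm s v = 1" and p: "p > 1"
    and A: "pos_power_integral b (p + 1) v > 0" and e: "0 < e" "e < 1" and t: "t > 0"
  shows "I_fun s p b g (\<lambda>x. t * v x) \<le> (1 + e) powr ((p + 1) / (p - 1))
     * ray_sup (p + 1) (pos_power_integral b (p + 1) v) + 1 / (2 * e) * (hminus_norm s g)\<^sup>2"
proof -
  define A' where "A' = pos_power_integral b (p + 1) v"
  have q: "p + 1 > 2" using p by simp
  have "I_fun s p (\<lambda>x. b x / (1 + e)) (\<lambda>_. 0) (\<lambda>x. t * v x) \<le> ray_sup (p + 1) (A' / (1 + e))"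
    unfolding I_fun_ray_unit[OF v less_imp_le[OF t]] A'_def[symmetric]
    using ray_sup_upper[OF t _ q, of "A' / (1 + e)"] A e by (simp add: A'_def)
  then have "(1 + e) * I_fun s p (\<lambda>x. b x / (1 + e)) (\<lambda>_. 0) (\<lambda>x. t * v x)
      \<le> (1 + e) * ray_sup (p + 1) (A' / (1 + e))"
    using e by (intro mult_left_mono) auto
  then have "I_fun s p b g (\<lambda>x. t * v x)
      \<le> (1 + e) * ray_sup (p + 1) (A' / (1 + e)) + 1 / (2 * e) * (hminus_norm s g)\<^sup>2"
    using I_fun_bounds(2)[OF g Hs_scale[OF v(1)] e, of p b t] by linarith
  also have "(1 + e) * ray_sup (p + 1) (A' / (1 + e)) = (1 + e) powr ((p + 1) / (p - 1)) * ray_sup (p + 1) A'"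
    using ray_sup_scale[of A' "1 + e" "p + 1"] A e q by (simp add: A'_def)
  finally show ?thesis unfolding A'_def .
qed

lemma J_fun_bdd_above:
  assumes g: "g \<in> Hminus s" and v: "v \<in> Hs s" "hs_norm s v = 1" and p: "p > 1"
    and A: "pos_power_integral b (p + 1) v > 0"
  shows "bdd_above ((\<lambda>t. I_fun s p b g (\<lambda>x. t * v x)) ` {0<..})"
  using I_fun_ray_upper[OF g v p A, of "1/2"] by (intro bdd_aboveI2) auto

lemma J_fun_upper_bound:
  assumes g: "g \<in> Hminus s" and v: "v \<in> Hs s" "hs_norm s v = 1" and p: "p > 1"
    and A: "pos_power_integral b (p + 1) v > 0" and e: "0 < e" "e < 1"
  shows "J_fun s p b g v \<le> (1 + e) powr ((p + 1) / (p - 1)) * J_fun s p b (\<lambda>_. 0) v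
          + 1 / (2 * e) * (hminus_norm s g)\<^sup>2"
  unfolding J_fun_zero_eq[OF v p A] J_fun_def[of s p b g]
  using I_fun_ray_upper[OF g v p A e] by (intro cSUP_least) auto

lemma J_fun_lower_bound:
  assumes g: "g \<in> Hminus s" and v: "v \<in> Hs s" "hs_norm s v = 1" and p: "p > 1"
    and A: "pos_power_integral b (p + 1) v > 0" and e: "0 < e" "e < 1"
  shows "(1 - e) powr ((p + 1) / (p - 1)) * J_fun s p b (\<lambda>_. 0) v
          - 1 / (2 * e) * (hminus_norm s g)\<^sup>2 \<le> J_fun s p b g v"
proof -
  define A' where "A' = pos_power_integral b (p + 1) v"
  have q: "p + 1 > 2" using p by simp
  have B: "A' / (1 - e) > 0" using A e by (simp add: A'_def)
  obtain t where t: "t > 0" "t\<^sup>2 / 2 - t powr (p + 1) / (p + 1) * (A' / (1 - e))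
      = ray_sup (p + 1) (A' / (1 - e))"
    using ray_sup_attained[OF B q] by blast
  have "(1 - e) powr ((p + 1) / (p - 1)) * ray_sup (p + 1) A' = (1 - e) * ray_sup (p + 1) (A' / (1 - e))"
    using ray_sup_scale[of A' "1 - e" "p + 1"] A e q by (simp add: A'_def)
  also have "\<dots> = (1 - e) * I_fun s p (\<lambda>x. b x / (1 - e)) (\<lambda>_. 0) (\<lambda>x. t * v x)"
    unfolding I_fun_ray_unit[OF v less_imp_le[OF t(1)]] A'_def[symmetric] t(2) ..
  finally have "(1 - e) powr ((p + 1) / (p - 1)) * ray_sup (p + 1) A' - 1 / (2 * e) * (hminus_norm s g)\<^sup>2
       \<le> I_fun s p b g (\<lambda>x. t * v x)"
    using I_fun_bounds(1)[OF g Hs_scale[OF v(1)] e, of p b t] by simp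
  also have "\<dots> \<le> J_fun s p b g v"
    unfolding J_fun_def using J_fun_bdd_above[OF g v p A] t(1) by (intro cSUP_upper) auto
  finally show ?thesis
    unfolding J_fun_zero_eq[OF v p A] A'_def .
qed

section \<open>A Sobolev bound for the positive part\<close>

lemma le_suminf_ennreal: "(f :: nat \<Rightarrow> ennreal) k \<le> (\<Sum>i. f i)"
  using sum_le_suminf[of f "{k}"] by auto

lemma suminf_ennreal_geometric:
  assumes r: "0 \<le> r" "r < 1" and c: "c \<ge> 0"
  shows "(\<Sum>k. ennreal (c * r ^ k)) = ennreal (c / (1 - r))"
proof -
  have "(\<lambda>k. c * r ^ k) sums (c * (1 / (1 - r)))"
    using r by (intro sums_mult geometric_sums) auto
  then show ?thesis
    using r c by (subst suminf_ennreal_eq) auto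
qed

lemma emeasure_superlevel_le:
  fixes u :: "'a::euclidean_space \<Rightarrow> real"
  assumes [measurable]: "u \<in> borel_measurable lborel" and l: "l > 0"
  shows "ennreal (l\<^sup>2) * emeasure lborel {x. u x > l} \<le> (\<integral>\<^sup>+x. ennreal ((u x)\<^sup>2) \<partial>lborel)"
proof -
  have "ennreal (l\<^sup>2) * emeasure lborel {x. u x > l}
      = (\<integral>\<^sup>+x. ennreal (l\<^sup>2) * indicator {x. u x > l} x \<partial>lborel)"
    by (rule nn_integral_cmult_indicator[symmetric]) auto
  also have "\<dots> \<le> (\<integral>\<^sup>+x. ennreal ((u x)\<^sup>2) \<partial>lborel)"
  proof (intro nn_integral_mono)
    fix x
    show "ennreal (l\<^sup>2) * indicator {x. u x > l} x \<le> ennreal ((u x)\<^sup>2)"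
      using l by (cases "u x > l") (auto intro!: ennreal_leI power_mono)
  qed
  finally show ?thesis .
qed

text \<open>If \<open>u > 2l\<close> at \<open>x\<close>, every \<open>y\<close> with \<open>u y \<le> l\<close> in the ball \<open>B(x,R)\<close> contributes
  at least \<open>l\<^sup>2 / R\<^sup>e\<close> to the Gagliardo integrand, and the ball contains at least
  \<open>|B(x,R)| - |{u > l}|\<close> such points.\<close>

lemma gagliardo_fibre_superlevel_bound:
  fixes u :: "'a::euclidean_space \<Rightarrow> real"
  assumes [measurable]: "u \<in> borel_measurable lborel" and l: "l > 0" and R: "R > 0" and e: "e \<ge> 0"
    and x: "u x > 2 * l"
  shows "ennreal (l\<^sup>2 / R powr e)
      * (ennreal (unit_ball_vol (real DIM('a)) * R ^ DIM('a)) - emeasure lborel {x. u x > l})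
    \<le> (\<integral>\<^sup>+y. ennreal ((u x - u y)\<^sup>2 / norm (x - y) powr e) \<partial>lborel)"
proof -
  define E where "E = ball x R \<inter> {y. u y \<le> l}"
  have E: "E \<in> sets lborel"
    unfolding E_def by measurable
  have "emeasure lborel (ball x R) \<le> emeasure lborel ({y. u y > l} \<union> E)"
    by (intro emeasure_mono) (auto simp: E_def)
  also have "\<dots> \<le> emeasure lborel {y. u y > l} + emeasure lborel E"
    by (rule emeasure_subadditive) (use E in auto)
  finally have "ennreal (unit_ball_vol (real DIM('a)) * R ^ DIM('a)) - emeasure lborel {x. u x > l}
      \<le> emeasure lborel E"
    using R by (simp add: emeasure_ball ennreal_minus_le_iff)
  then have "ennreal (l\<^sup>2 / R powr e)
      * (ennreal (unit_ball_vol (real DIM('a)) * R ^ DIM('a)) - emeasure lborel {x. u x > l})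
      \<le> ennreal (l\<^sup>2 / R powr e) * emeasure lborel E"
    by (rule mult_left_mono) simp
  also have "\<dots> = (\<integral>\<^sup>+y. ennreal (l\<^sup>2 / R powr e) * indicator E y \<partial>lborel)"
    by (rule nn_integral_cmult_indicator[symmetric, OF E])
  also have "\<dots> \<le> (\<integral>\<^sup>+y. ennreal ((u x - u y)\<^sup>2 / norm (x - y) powr e) \<partial>lborel)"
  proof (intro nn_integral_mono)
    fix y
    show "ennreal (l\<^sup>2 / R powr e) * indicator E y \<le> ennreal ((u x - u y)\<^sup>2 / norm (x - y) powr e)"
    proof (cases "y \<in> E")
      case True
      then have d: "l < u x - u y" and "norm (x - y) < R"
        using x by (auto simp: E_def dist_norm)
      moreover have "0 < norm (x - y)"
        using d l by auto
      ultimately have "l\<^sup>2 / R powr e \<le> (u x - u y)\<^sup>2 / norm (x - y) powr e"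
        using l e by (intro frac_le power_mono powr_mono2) auto
      then show ?thesis
        using True by (auto intro: ennreal_leI)
    qed simp
  qed
  finally show ?thesis .
qed

lemma gagliardo_superlevel_bound:
  fixes u :: "'a::euclidean_space \<Rightarrow> real"
  assumes u[measurable]: "u \<in> borel_measurable lborel" and l: "l > 0" and R: "R > 0" and e: "e \<ge> 0"
  shows "ennreal (l\<^sup>2 / R powr e) * emeasure lborel {x. u x > 2 * l}
      * (ennreal (unit_ball_vol (real DIM('a)) * R ^ DIM('a)) - emeasure lborel {x. u x > l})
    \<le> (\<integral>\<^sup>+ z. ennreal ((u (fst z) - u (snd z))\<^sup>2 / norm (fst z - snd z) powr e) \<partial>(lborel \<Otimes>\<^sub>M lborel))"
proof -
  define c where "c = ennreal (l\<^sup>2 / R powr e)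
      * (ennreal (unit_ball_vol (real DIM('a)) * R ^ DIM('a)) - emeasure lborel {x. u x > l})"
  have "c * emeasure lborel {x. u x > 2 * l} = (\<integral>\<^sup>+x. c * indicator {x. u x > 2 * l} x \<partial>lborel)"
    by (rule nn_integral_cmult_indicator[symmetric]) auto
  also have "\<dots> \<le> (\<integral>\<^sup>+x. \<integral>\<^sup>+y. ennreal ((u x - u y)\<^sup>2 / norm (x - y) powr e) \<partial>lborel \<partial>lborel)"
    unfolding c_def using gagliardo_fibre_superlevel_bound[OF u l R e]
    by (intro nn_integral_mono) (auto simp: indicator_def)
  also have "\<dots> = (\<integral>\<^sup>+ z. ennreal ((u (fst z) - u (snd z))\<^sup>2 / norm (fst z - snd z) powr e)
      \<partial>(lborel \<Otimes>\<^sub>M lborel))"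
    by (rule lborel.nn_integral_fst[where f = "\<lambda>z. ennreal ((u (fst z) - u (snd z))\<^sup>2
      / norm (fst z - snd z) powr e)", simplified]) measurable
  finally show ?thesis
    unfolding c_def by (simp add: ac_simps)
qed

lemma measure_superlevel_double_le_radius:
  fixes u :: "'a::euclidean_space \<Rightarrow> real"
  assumes u[measurable]: "u \<in> borel_measurable lborel" and l: "l > 0" and R: "R > 0" and e: "e \<ge> 0"
    and G: "(\<integral>\<^sup>+ z. ennreal ((u (fst z) - u (snd z))\<^sup>2 / norm (fst z - snd z) powr e)
            \<partial>(lborel \<Otimes>\<^sub>M lborel)) \<le> 1"
    and fin: "emeasure lborel {x. u x > l} < \<infinity>"
    and ball: "unit_ball_vol (real DIM('a)) * R ^ DIM('a) = 2 * measure lborel {x. u x > l}"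
  shows "l\<^sup>2 * measure lborel {x. u x > 2 * l} * measure lborel {x. u x > l} \<le> R powr e"
proof -
  define m where "m = measure lborel {x. u x > l}"
  define m2 where "m2 = measure lborel {x. u x > 2 * l}"
  have em: "emeasure lborel {x. u x > l} = ennreal m"
    unfolding m_def using fin by (simp add: emeasure_eq_ennreal_measure)
  have "emeasure lborel {x. u x > 2 * l} \<le> emeasure lborel {x. u x > l}"
    using l by (intro emeasure_mono) auto
  then have "emeasure lborel {x. u x > 2 * l} < \<infinity>"
    using fin by (rule le_less_trans)
  then have em2: "emeasure lborel {x. u x > 2 * l} = ennreal m2"
    unfolding m2_def by (simp add: emeasure_eq_ennreal_measure)
  have W: "ennreal (unit_ball_vol (real DIM('a)) * R ^ DIM('a)) - emeasure lborel {x. u x > l} = ennreal m"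
    unfolding ball em m_def[symmetric] by (subst ennreal_minus) (auto simp: m_def)
  have "ennreal (l\<^sup>2 / R powr e) * ennreal m2 * ennreal m
      \<le> (\<integral>\<^sup>+ z. ennreal ((u (fst z) - u (snd z))\<^sup>2 / norm (fst z - snd z) powr e) \<partial>(lborel \<Otimes>\<^sub>M lborel))"
    using gagliardo_superlevel_bound[OF u l R e] unfolding em2 W .
  also have "\<dots> \<le> 1"
    by (rule G)
  finally have "ennreal (l\<^sup>2 / R powr e) * ennreal m2 * ennreal m \<le> 1" .
  moreover have "0 \<le> m" "0 \<le> m2"
    unfolding m_def m2_def by auto
  ultimately have "l\<^sup>2 * m2 * m / R powr e \<le> 1"
    by (simp add: ennreal_mult[symmetric] del: ennreal_mult)
  then show ?thesis
    unfolding m_def[symmetric] m2_def[symmetric] using R by (simp add: divide_le_eq)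
qed

lemma measure_superlevel_double_le:
  fixes u :: "'a::euclidean_space \<Rightarrow> real"
  assumes [measurable]: "u \<in> borel_measurable lborel" and l: "l > 0" and s: "s > 0"
    and G: "(\<integral>\<^sup>+ z. ennreal ((u (fst z) - u (snd z))\<^sup>2 / norm (fst z - snd z) powr (real DIM('a) + 2 * s))
            \<partial>(lborel \<Otimes>\<^sub>M lborel)) \<le> 1"
    and fin: "emeasure lborel {x. u x > l} < \<infinity>"
  shows "measure lborel {x. u x > 2 * l} \<le> (2 / unit_ball_vol (real DIM('a))) powr (1 + 2 * s / real DIM('a))
           * (1 / l\<^sup>2) * measure lborel {x. u x > l} powr (2 * s / real DIM('a))"
proof -
  define N where "N = real DIM('a)"
  define \<omega> where "\<omega> = unit_ball_vol N"
  define \<beta> where "\<beta> = 2 * s / N"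
  define m where "m = measure lborel {x. u x > l}"
  define m2 where "m2 = measure lborel {x. u x > 2 * l}"
  have N: "N > 0" and \<omega>: "\<omega> > 0"
    unfolding N_def \<omega>_def by simp_all
  show ?thesis
  proof (cases "m = 0")
    case True
    have "m2 \<le> m"
      unfolding m_def m2_def using fin l
      by (intro measure_mono_fmeasurable) (auto simp: fmeasurable_def)
    then show ?thesis
      using True measure_nonneg[of lborel "{x. u x > 2 * l}"]
      unfolding m_def[symmetric] m2_def[symmetric] by simp
  next
    case False
    then have m: "m > 0"
      unfolding m_def by (simp add: zero_less_measure_iff)
    define R where "R = (2 * m / \<omega>) powr (1 / N)"
    have R: "R > 0"
      unfolding R_def using m \<omega> by simp
    have "\<omega> * R ^ DIM('a) = 2 * m"
      unfolding R_def N_def using m \<omega> by (simp add: powr_realpow[symmetric] powr_powr)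
    then have "l\<^sup>2 * m2 * m \<le> R powr (N + 2 * s)"
      unfolding m_def m2_def N_def
      using measure_superlevel_double_le_radius[OF _ l R _ G fin] s \<omega>_def N_def by simp
    then have "m2 \<le> R powr (N + 2 * s) / (l\<^sup>2 * m)"
      using m l by (simp add: field_simps)
    also have "R powr (N + 2 * s) = ((2 / \<omega>) * m) powr (1 + \<beta>)"
      unfolding R_def \<beta>_def using N m \<omega> by (simp add: powr_powr add_divide_distrib)
    also have "\<dots> = (2 / \<omega>) powr (1 + \<beta>) * (m powr 1 * m powr \<beta>)"
      using m \<omega> by (simp only: powr_mult powr_add) simp
    also have "\<dots> / (l\<^sup>2 * m) = (2 / \<omega>) powr (1 + \<beta>) * (1 / l\<^sup>2) * m powr \<beta>"
      using m by (simp add: field_simps)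
    finally show ?thesis
      unfolding m2_def m_def \<beta>_def N_def \<omega>_def .
  qed
qed

text \<open>The recursion \<open>a\<^bsub>k+1\<^esub> \<le> K 4\<^bsup>-k\<^esup> a\<^sub>k\<^sup>\<beta>\<close> turns a decay rate \<open>2\<^bsup>-\<gamma>k\<^esup>\<close> into
  \<open>2\<^bsup>-(2+\<beta>\<gamma>)k\<^esup>\<close>; starting from \<open>\<gamma> = 2\<close> the exponents increase to \<open>2 / (1 - \<beta>)\<close>.\<close>

definition decay_exponent :: "real \<Rightarrow> nat \<Rightarrow> real" where
  "decay_exponent \<beta> j = 2 * (1 - \<beta> ^ Suc j) / (1 - \<beta>)"

fun decay_const :: "real \<Rightarrow> real \<Rightarrow> nat \<Rightarrow> real" where
  "decay_const K \<beta> 0 = 1"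
| "decay_const K \<beta> (Suc j) = max 1 (K * decay_const K \<beta> j powr \<beta> * 2 powr decay_exponent \<beta> (Suc j))"

lemma decay_const_ge_1: "decay_const K \<beta> j \<ge> 1"
  by (cases j) auto

lemma decay_exponent_0: "\<beta> < 1 \<Longrightarrow> decay_exponent \<beta> 0 = 2"
  unfolding decay_exponent_def by (simp add: field_simps)

lemma decay_exponent_Suc: "\<beta> < 1 \<Longrightarrow> decay_exponent \<beta> (Suc j) = 2 + \<beta> * decay_exponent \<beta> j"
  unfolding decay_exponent_def by (simp add: field_simps)

lemma decay_exponent_gt:
  assumes \<beta>: "0 < \<beta>" "\<beta> < 1" and q: "q * (1 - \<beta>) < 2"
  shows "\<exists>j. decay_exponent \<beta> j > q"
proof -
  have "\<forall>\<^sub>F j in sequentially. \<bar>\<beta> ^ j\<bar> < 1 - q * (1 - \<beta>) / 2"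
    using \<beta> q by (intro Archimedean_eventually_pow_inverse) auto
  then obtain j where j: "\<bar>\<beta> ^ j\<bar> < 1 - q * (1 - \<beta>) / 2"
    by (auto simp: eventually_sequentially)
  have "\<beta> ^ Suc j \<le> \<beta> ^ j"
    using \<beta> by (intro power_decreasing) auto
  then have "2 * (1 - \<beta> ^ Suc j) > q * (1 - \<beta>)"
    using j by simp
  then show ?thesis
    unfolding decay_exponent_def using \<beta> by (auto simp: field_simps)
qed

lemma decay_iteration:
  fixes a :: "nat \<Rightarrow> real"
  assumes a0: "\<And>k. 0 \<le> a k" and a1: "\<And>k. a k \<le> 2 powr (- 2 * real k)"
    and rec: "\<And>k. a (Suc k) \<le> K * 2 powr (- 2 * real k) * a k powr \<beta>"
    and K: "K > 0" and \<beta>: "0 < \<beta>" "\<beta> < 1"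
  shows "a k \<le> decay_const K \<beta> j * 2 powr (- decay_exponent \<beta> j * real k)"
proof (induction j arbitrary: k)
  case 0
  then show ?case using a1[of k] decay_exponent_0[OF \<beta>(2)] by simp
next
  case (Suc j)
  define C where "C = decay_const K \<beta> j"
  define \<gamma> where "\<gamma> = decay_exponent \<beta> j"
  have C: "C \<ge> 1"
    unfolding C_def by (rule decay_const_ge_1)
  have \<gamma>': "decay_exponent \<beta> (Suc j) = 2 + \<beta> * \<gamma>"
    unfolding \<gamma>_def by (rule decay_exponent_Suc[OF \<beta>(2)])
  show ?case
  proof (cases k)
    case 0
    then show ?thesis
      using a1[of 0] decay_const_ge_1[of K \<beta> "Suc j"] by simp
  next
    case (Suc m)
    have IH: "a m \<le> C * 2 powr (- \<gamma> * real m)"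
      unfolding C_def \<gamma>_def by (rule Suc.IH)
    have "a (Suc m) \<le> K * 2 powr (- 2 * real m) * a m powr \<beta>"
      by (rule rec)
    also have "a m powr \<beta> \<le> (C * 2 powr (- \<gamma> * real m)) powr \<beta>"
      using IH a0[of m] \<beta> by (intro powr_mono2) auto
    also have "(C * 2 powr (- \<gamma> * real m)) powr \<beta> = C powr \<beta> * 2 powr (- \<beta> * \<gamma> * real m)"
      using C by (simp add: powr_mult powr_powr algebra_simps)
    also have "K * 2 powr (- 2 * real m) * (C powr \<beta> * 2 powr (- \<beta> * \<gamma> * real m))
        = K * C powr \<beta> * 2 powr decay_exponent \<beta> (Suc j) * 2 powr (- decay_exponent \<beta> (Suc j) * real (Suc m))"
      unfolding \<gamma>' by (simp add: powr_add[symmetric] algebra_simps)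
    also have "\<dots> \<le> decay_const K \<beta> (Suc j) * 2 powr (- decay_exponent \<beta> (Suc j) * real (Suc m))"
      unfolding C_def by (intro mult_right_mono) auto
    finally show ?thesis
      using Suc K by (simp add: mult_left_mono)
  qed
qed

lemma exists_dyadic_above:
  fixes y :: real
  assumes "y > 1"
  shows "\<exists>k::nat. 2 powr real k < y \<and> y \<le> 2 powr (real k + 1)"
proof -
  define k where "k = nat \<lceil>log 2 y\<rceil> - 1"
  have "log 2 y > 0"
    using assms by simp
  then have k: "real k + 1 = of_int \<lceil>log 2 y\<rceil>"
    unfolding k_def by (subst of_nat_diff) (auto simp: Suc_le_eq)
  have "log 2 y \<le> real k + 1" "real k < log 2 y"
    using k ceiling_correct[of "log 2 y"] by linarith+
  then show ?thesis
    using assms by (auto simp: log_le_iff less_log_iff)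
qed

lemma exists_dyadic_below:
  fixes t :: real
  assumes "t \<ge> 1"
  shows "\<exists>j::nat. 2 powr real j \<le> t \<and> t < 2 powr (real j + 1)"
proof -
  define j where "j = nat \<lfloor>log 2 t\<rfloor>"
  have "real j = of_int \<lfloor>log 2 t\<rfloor>"
    unfolding j_def using assms by simp
  then have "real j \<le> log 2 t" "log 2 t < real j + 1"
    by linarith+
  then show ?thesis
    using assms by (auto simp: le_log_iff log_less_iff)
qed

lemma pos_part_powr_le_dyadic_sum:
  fixes y q :: real
  assumes q: "q \<ge> 2"
  shows "ennreal ((max y 0) powr q) \<le> ennreal (y\<^sup>2)
     + (\<Sum>k. ennreal (2 powr ((real k + 1) * q)) * indicator {z. z > 2 powr real k} y)"
proof (cases "y \<le> 1")
  case True
  have "(max y 0) powr q \<le> y\<^sup>2"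
  proof (cases "y \<le> 0")
    case False
    then have "y powr q \<le> y powr 2"
      using True q by (intro powr_mono') auto
    then show ?thesis
      using False by (simp add: powr_realpow)
  qed simp
  then show ?thesis
    by (intro add_increasing2 ennreal_leI) auto
next
  case False
  then obtain k :: nat where k: "2 powr real k < y" "y \<le> 2 powr (real k + 1)"
    using exists_dyadic_above by force
  have "(max y 0) powr q \<le> (2 powr (real k + 1)) powr q"
    using False k q by (intro powr_mono2) auto
  then have "ennreal ((max y 0) powr q)
      \<le> ennreal (2 powr ((real k + 1) * q)) * indicator {z. z > 2 powr real k} y"
    using k by (auto simp: powr_powr intro: ennreal_leI)
  also have "\<dots> \<le> (\<Sum>k. ennreal (2 powr ((real k + 1) * q)) * indicator {z. z > 2 powr real k} y)"
    by (rule le_suminf_ennreal)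
  finally show ?thesis
    by (rule add_increasing[OF zero_le])
qed

lemma nn_integral_pos_part_powr_le:
  fixes u :: "'a::euclidean_space \<Rightarrow> real"
  assumes [measurable]: "u \<in> borel_measurable lborel" and q: "q \<ge> 2"
  shows "(\<integral>\<^sup>+x. ennreal ((max (u x) 0) powr q) \<partial>lborel) \<le> (\<integral>\<^sup>+x. ennreal ((u x)\<^sup>2) \<partial>lborel)
     + (\<Sum>k. ennreal (2 powr ((real k + 1) * q)) * emeasure lborel {x. u x > 2 powr real k})"
proof -
  have "(\<integral>\<^sup>+x. ennreal ((max (u x) 0) powr q) \<partial>lborel) \<le> (\<integral>\<^sup>+x. ennreal ((u x)\<^sup>2)
     + (\<Sum>k. ennreal (2 powr ((real k + 1) * q)) * indicator {z. u z > 2 powr real k} x) \<partial>lborel)"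
    by (intro nn_integral_mono) (use pos_part_powr_le_dyadic_sum[OF q] in \<open>auto simp: indicator_def\<close>)
  also have "\<dots> = (\<integral>\<^sup>+x. ennreal ((u x)\<^sup>2) \<partial>lborel)
     + (\<Sum>k. \<integral>\<^sup>+x. ennreal (2 powr ((real k + 1) * q)) * indicator {z. u z > 2 powr real k} x \<partial>lborel)"
    by (simp add: nn_integral_add nn_integral_suminf)
  also have "\<dots> = (\<integral>\<^sup>+x. ennreal ((u x)\<^sup>2) \<partial>lborel)
     + (\<Sum>k. ennreal (2 powr ((real k + 1) * q)) * emeasure lborel {x. u x > 2 powr real k})"
    by (simp add: nn_integral_cmult_indicator)
  finally show ?thesis .
qed

lemma superlevel_measure_bounds:
  fixes u :: "'a::euclidean_space \<Rightarrow> real"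
  assumes u: "u \<in> Hs s" "hs_norm_sq s u \<le> 1" and s: "s > 0"
  defines "m \<equiv> \<lambda>k::nat. measure lborel {x. u x > 2 powr real k}"
  shows "emeasure lborel {x. u x > 2 powr real k} = ennreal (m k)"
    and "m k \<le> 2 powr (- 2 * real k)"
    and "m (Suc k) \<le> (2 / unit_ball_vol (real DIM('a))) powr (1 + 2 * s / real DIM('a))
           * 2 powr (- 2 * real k) * m k powr (2 * s / real DIM('a))"
proof -
  have [measurable]: "u \<in> borel_measurable lborel"
    using u unfolding Hs_def by auto
  have L2: "(\<integral>\<^sup>+ x. ennreal ((u x)\<^sup>2) \<partial>lborel) \<le> 1"
    and G: "(\<integral>\<^sup>+ z. ennreal ((u (fst z) - u (snd z))\<^sup>2
          / norm (fst z - snd z) powr (real DIM('a) + 2 * s)) \<partial>(lborel \<Otimes>\<^sub>M lborel)) \<le> 1"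
    using u(2) unfolding hs_norm_sq_def by (auto intro: order_trans[rotated])
  have pow: "(2 powr real k)\<^sup>2 = 2 powr (2 * real k)" for k
    by (simp add: power2_eq_square powr_add[symmetric])
  have cheb: "ennreal (2 powr (2 * real k)) * emeasure lborel {x. u x > 2 powr real k} \<le> 1" for k
    using emeasure_superlevel_le[of u "2 powr real k"] L2 unfolding pow by simp
  have fin: "emeasure lborel {x. u x > 2 powr real k} < \<infinity>" for k
    using cheb[of k] by (auto simp: less_top[symmetric] ennreal_mult_top top_unique)
  show em: "emeasure lborel {x. u x > 2 powr real k} = ennreal (m k)" for k
    unfolding m_def using fin[of k] by (simp add: emeasure_eq_ennreal_measure)
  have "2 powr (2 * real k) * m k \<le> 1"
    using cheb[of k] unfolding em by (simp add: ennreal_mult[symmetric] ennreal_le_1 m_def)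
  then show "m k \<le> 2 powr (- 2 * real k)"
    by (simp add: powr_minus field_simps)
  have "measure lborel {x. u x > 2 * 2 powr real k}
      \<le> (2 / unit_ball_vol (real DIM('a))) powr (1 + 2 * s / real DIM('a))
         * (1 / (2 powr real k)\<^sup>2) * m k powr (2 * s / real DIM('a))"
    unfolding m_def by (rule measure_superlevel_double_le[OF _ _ s G fin]) auto
  moreover have "2 * 2 powr real k = 2 powr real (Suc k)"
    by (simp add: powr_add)
  moreover have "1 / (2 powr real k)\<^sup>2 = 2 powr (- 2 * real k)"
    unfolding pow by (simp add: powr_minus divide_inverse)
  ultimately show "m (Suc k) \<le> (2 / unit_ball_vol (real DIM('a))) powr (1 + 2 * s / real DIM('a))
           * 2 powr (- 2 * real k) * m k powr (2 * s / real DIM('a))"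
    unfolding m_def by simp
qed

lemma nn_integral_pos_part_powr_le_decay:
  fixes u :: "'a::euclidean_space \<Rightarrow> real"
  assumes [measurable]: "u \<in> borel_measurable lborel" and q: "q \<ge> 2" "\<gamma> > q" and C: "C \<ge> 0"
    and decay: "\<And>k. emeasure lborel {x. u x > 2 powr real k} \<le> ennreal (C * 2 powr (- \<gamma> * real k))"
  shows "(\<integral>\<^sup>+x. ennreal ((max (u x) 0) powr q) \<partial>lborel)
     \<le> (\<integral>\<^sup>+x. ennreal ((u x)\<^sup>2) \<partial>lborel) + ennreal (2 powr q * C / (1 - 2 powr (q - \<gamma>)))"
proof -
  define r where "r = 2 powr (q - \<gamma>)"
  have r: "0 \<le> r" "r < 1"
    unfolding r_def using q powr_less_mono[of "q - \<gamma>" 0 2] by auto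
  have summand: "ennreal (2 powr ((real k + 1) * q)) * emeasure lborel {x. u x > 2 powr real k}
      \<le> ennreal (2 powr q * C * r ^ k)" for k
  proof -
    have "2 powr ((real k + 1) * q) * 2 powr (- \<gamma> * real k) = 2 powr q * r ^ k"
      unfolding r_def by (simp add: powr_realpow[symmetric] powr_powr powr_add[symmetric] algebra_simps)
    then have "ennreal (2 powr ((real k + 1) * q)) * ennreal (C * 2 powr (- \<gamma> * real k))
        = ennreal (2 powr q * C * r ^ k)"
      using C by (simp add: ennreal_mult[symmetric] ac_simps)
    then show ?thesis
      using decay[of k] by (metis mult_left_mono zero_le)
  qed
  have "(\<integral>\<^sup>+x. ennreal ((max (u x) 0) powr q) \<partial>lborel) \<le> (\<integral>\<^sup>+x. ennreal ((u x)\<^sup>2) \<partial>lborel)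
     + (\<Sum>k. ennreal (2 powr ((real k + 1) * q)) * emeasure lborel {x. u x > 2 powr real k})"
    using q by (intro nn_integral_pos_part_powr_le) auto
  also have "\<dots> \<le> (\<integral>\<^sup>+x. ennreal ((u x)\<^sup>2) \<partial>lborel) + (\<Sum>k. ennreal (2 powr q * C * r ^ k))"
    using summand by (intro add_left_mono suminf_le) auto
  also have "(\<Sum>k. ennreal (2 powr q * C * r ^ k)) = ennreal (2 powr q * C / (1 - r))"
    using C r by (intro suminf_ennreal_geometric) auto
  finally show ?thesis
    unfolding r_def .
qed

lemma superlevel_measure_decay:
  fixes u :: "'a::euclidean_space \<Rightarrow> real"
  assumes u: "u \<in> Hs s" "hs_norm_sq s u \<le> 1" and s: "0 < s" and N: "real DIM('a) > 2 * s"
  defines "\<beta> \<equiv> 2 * s / real DIM('a)"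
    and "K \<equiv> (2 / unit_ball_vol (real DIM('a))) powr (1 + 2 * s / real DIM('a))"
  shows "emeasure lborel {x. u x > 2 powr real k}
    \<le> ennreal (decay_const K \<beta> j * 2 powr (- decay_exponent \<beta> j * real k))"
proof -
  have "unit_ball_vol (real DIM('a)) > 0"
    by simp
  then have "K > 0"
    unfolding K_def by (metis divide_pos_pos powr_gt_zero zero_less_numeral less_irrefl)
  moreover have "0 < \<beta>" "\<beta> < 1"
    unfolding \<beta>_def using s N by auto
  ultimately have "measure lborel {x. u x > 2 powr real k}
      \<le> decay_const K \<beta> j * 2 powr (- decay_exponent \<beta> j * real k)"
    using superlevel_measure_bounds[OF u s] unfolding K_def[symmetric] unfolding \<beta>_def[symmetric]
    by (intro decay_iteration) auto
  then show ?thesis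
    using superlevel_measure_bounds(1)[OF u s] by (simp add: ennreal_leI)
qed

lemma Hs_pos_part_Lq_bound:
  fixes s q :: real
  assumes s: "0 < s" and N: "real DIM('a) > 2 * s"
    and q: "2 < q" "q < 2 * real DIM('a) / (real DIM('a) - 2 * s)"
  shows "\<exists>S>0. \<forall>u::'a::euclidean_space \<Rightarrow> real. u \<in> Hs s \<longrightarrow> hs_norm_sq s u \<le> 1 \<longrightarrow>
           (\<integral>\<^sup>+x. ennreal ((max (u x) 0) powr q) \<partial>lborel) \<le> ennreal S"
proof -
  define \<beta> where "\<beta> = 2 * s / real DIM('a)"
  define K where "K = (2 / unit_ball_vol (real DIM('a))) powr (1 + 2 * s / real DIM('a))"
  have "0 < \<beta>" "\<beta> < 1" "q * (1 - \<beta>) < 2"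
    unfolding \<beta>_def using s N q(2) by (auto simp: field_simps)
  then obtain j where j: "decay_exponent \<beta> j > q"
    using decay_exponent_gt by blast
  define \<gamma> where "\<gamma> = decay_exponent \<beta> j"
  define C where "C = decay_const K \<beta> j"
  define S where "S = 1 + 2 powr q * C / (1 - 2 powr (q - \<gamma>))"
  have C: "C \<ge> 1"
    unfolding C_def by (rule decay_const_ge_1)
  then have frac: "2 powr q * C / (1 - 2 powr (q - \<gamma>)) \<ge> 0"
    using j powr_less_mono[of "q - \<gamma>" 0 2] unfolding \<gamma>_def by auto
  show ?thesis
  proof (intro exI[of _ S] conjI allI impI)
    show "S > 0"
      unfolding S_def using frac by simp
    fix u :: "'a \<Rightarrow> real"
    assume u: "u \<in> Hs s" "hs_norm_sq s u \<le> 1"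
    have [measurable]: "u \<in> borel_measurable lborel"
      using u unfolding Hs_def by auto
    have "(\<integral>\<^sup>+x. ennreal ((max (u x) 0) powr q) \<partial>lborel)
        \<le> (\<integral>\<^sup>+x. ennreal ((u x)\<^sup>2) \<partial>lborel) + ennreal (2 powr q * C / (1 - 2 powr (q - \<gamma>)))"
      using q j C superlevel_measure_decay[OF u s N] unfolding \<gamma>_def C_def K_def \<beta>_def
      by (intro nn_integral_pos_part_powr_le_decay) auto
    also have "\<dots> \<le> 1 + ennreal (2 powr q * C / (1 - 2 powr (q - \<gamma>)))"
      using u(2) unfolding hs_norm_sq_def by (intro add_right_mono) (auto intro: order_trans[rotated])
    also have "\<dots> = ennreal S"
      unfolding S_def using ennreal_plus[OF _ frac, of 1] by simp
    finally show "(\<integral>\<^sup>+x. ennreal ((max (u x) 0) powr q) \<partial>lborel) \<le> ennreal S" .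
  qed
qed

section \<open>Lipschitz functions with bounded support\<close>

text \<open>The kernel dominates the Gagliardo integrand of a \<open>1\<close>-Lipschitz function with values in
  \<open>[0, 1]\<close>.\<close>

definition truncated_kernel :: "real \<Rightarrow> 'a::real_normed_vector \<Rightarrow> real" where
  "truncated_kernel e h = min 1 ((norm h)\<^sup>2) / norm h powr e"

lemma truncated_kernel_measurable[measurable]: "truncated_kernel e \<in> borel_measurable borel"
  unfolding truncated_kernel_def by measurable

lemma truncated_kernel_far:
  assumes "norm h \<ge> 1" "e \<ge> 0"
  shows "\<exists>j::nat. truncated_kernel e h \<le> 2 powr (- real j * e) \<and> h \<in> ball 0 (2 powr (real j + 1))"
proof -
  obtain j :: nat where j: "2 powr real j \<le> norm h" "norm h < 2 powr (real j + 1)"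
    using exists_dyadic_below[OF assms(1)] by blast
  have "truncated_kernel e h = 1 / norm h powr e"
    unfolding truncated_kernel_def using assms(1) by (simp add: one_le_power)
  also have "\<dots> \<le> 1 / (2 powr real j) powr e"
    using j(1) assms by (intro divide_left_mono powr_mono2 mult_pos_pos) auto
  also have "\<dots> = 2 powr (- real j * e)"
    by (simp add: powr_powr powr_minus divide_inverse)
  finally show ?thesis
    using j(2) by auto
qed

lemma truncated_kernel_near_eq:
  assumes t: "0 < norm h" "norm h < 1"
  shows "truncated_kernel (real N + 2 * s) h = norm h powr (2 - 2 * s) * (1 / norm h) powr N"
proof -
  have "min 1 ((norm h)\<^sup>2) = norm h powr 2"
    using t by (simp add: power_le_one powr_realpow)
  moreover have "norm h powr 2 / norm h powr (real N + 2 * s) = norm h powr ((2 - 2 * s) + (- real N))"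
    by (subst powr_diff[symmetric]) (rule arg_cong[where f = "(powr) (norm h)"], simp)
  moreover have "norm h powr ((2 - 2 * s) + (- real N)) = norm h powr (2 - 2 * s) * norm h powr (- real N)"
    by (rule powr_add)
  moreover have "norm h powr (- real N) = (1 / norm h) powr N"
    using t by (simp add: powr_minus_divide powr_divide)
  ultimately show ?thesis
    unfolding truncated_kernel_def by simp
qed

lemma truncated_kernel_near:
  assumes h: "0 < norm h" "norm h < 1" and s: "0 \<le> s" "s < 1"
  shows "\<exists>j::nat. truncated_kernel (real N + 2 * s) h \<le> 2 powr (- real j * (2 - 2 * s)) * 2 powr ((real j + 1) * N)
      \<and> h \<in> ball 0 (2 powr (1 - real j))"
proof -
  define t where "t = norm h"
  obtain j :: nat where j: "2 powr real j \<le> 1 / t" "1 / t < 2 powr (real j + 1)"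
    using exists_dyadic_below[of "1 / t"] h unfolding t_def by auto
  have t: "0 < t" "t \<le> 2 powr (- real j)"
    using h j(1) unfolding t_def by (auto simp: powr_minus field_simps)
  have "truncated_kernel (real N + 2 * s) h = t powr (2 - 2 * s) * (1 / t) powr N"
    unfolding t_def by (rule truncated_kernel_near_eq[OF h])
  also have "\<dots> \<le> (2 powr (- real j)) powr (2 - 2 * s) * (2 powr (real j + 1)) powr N"
    using t j(2) s by (intro mult_mono powr_mono2) auto
  also have "\<dots> = 2 powr (- real j * (2 - 2 * s)) * 2 powr ((real j + 1) * N)"
    by (simp add: powr_powr)
  finally have "truncated_kernel (real N + 2 * s) h \<le> \<dots>" .
  moreover have "t < 2 powr (1 - real j)"
    using t(2) powr_less_mono[of "- real j" "1 - real j" 2] by linarith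
  ultimately show ?thesis
    unfolding t_def by auto
qed

lemma truncated_kernel_le_dyadic_sums:
  fixes h :: "'a::euclidean_space"
  assumes s: "0 < s" "s < 1"
  defines "N \<equiv> real DIM('a)"
  shows "ennreal (truncated_kernel (N + 2 * s) h) \<le>
     (\<Sum>j. ennreal (2 powr (- real j * (N + 2 * s))) * indicator (ball 0 (2 powr (real j + 1))) h)
   + (\<Sum>j. ennreal (2 powr (- real j * (2 - 2 * s)) * 2 powr ((real j + 1) * N))
          * indicator (ball 0 (2 powr (1 - real j))) h)"
    (is "_ \<le> ?far + ?near")
proof (cases "norm h \<ge> 1")
  case True
  then obtain j :: nat where "truncated_kernel (N + 2 * s) h \<le> 2 powr (- real j * (N + 2 * s))"
      "h \<in> ball 0 (2 powr (real j + 1))"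
    using truncated_kernel_far[of h "N + 2 * s"] s unfolding N_def by auto
  then have "ennreal (truncated_kernel (N + 2 * s) h)
      \<le> ennreal (2 powr (- real j * (N + 2 * s))) * indicator (ball 0 (2 powr (real j + 1))) h"
    by (simp add: ennreal_leI)
  also have "\<dots> \<le> ?far"
    by (rule le_suminf_ennreal)
  finally show ?thesis
    by (rule add_increasing2[OF zero_le])
next
  case False
  show ?thesis
  proof (cases "h = 0")
    case False
    then obtain j :: nat where
      "truncated_kernel (N + 2 * s) h \<le> 2 powr (- real j * (2 - 2 * s)) * 2 powr ((real j + 1) * N)"
      "h \<in> ball 0 (2 powr (1 - real j))"
      using truncated_kernel_near[of h s "DIM('a)"] \<open>\<not> norm h \<ge> 1\<close> s unfolding N_def by auto
    then have "ennreal (truncated_kernel (N + 2 * s) h)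
        \<le> ennreal (2 powr (- real j * (2 - 2 * s)) * 2 powr ((real j + 1) * N))
           * indicator (ball 0 (2 powr (1 - real j))) h"
      by (simp add: ennreal_leI)
    also have "\<dots> \<le> ?near"
      by (rule le_suminf_ennreal)
    finally show ?thesis
      by (rule add_increasing[OF zero_le])
  qed (simp add: truncated_kernel_def)
qed

lemma nn_integral_ball_series:
  fixes x :: "'a::euclidean_space"
  assumes "\<And>j. c j \<ge> 0" "\<And>j. r j > 0"
  shows "(\<integral>\<^sup>+y. (\<Sum>j. ennreal (c j) * indicator (ball x (r j)) y) \<partial>lborel)
    = (\<Sum>j. ennreal (c j * (unit_ball_vol (real DIM('a)) * r j ^ DIM('a))))"
proof -
  have ball: "ennreal (c j) * emeasure lborel (ball x (r j))
      = ennreal (c j * (unit_ball_vol (real DIM('a)) * r j ^ DIM('a)))" for j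
  proof -
    have "emeasure lborel (ball x (r j)) = ennreal (unit_ball_vol (real DIM('a)) * r j ^ DIM('a))"
      by (rule emeasure_ball) (use assms(2)[of j] in auto)
    then show ?thesis
      using assms(1)[of j] assms(2)[of j] by (simp add: ennreal_mult)
  qed
  have [measurable]: "ball x \<rho> \<in> sets borel" for \<rho>
    by simp
  have "(\<integral>\<^sup>+y. (\<Sum>j. ennreal (c j) * indicator (ball x (r j)) y) \<partial>lborel)
      = (\<Sum>j. ennreal (c j) * emeasure lborel (ball x (r j)))"
    by (subst nn_integral_suminf) (auto intro!: suminf_cong nn_integral_cmult_indicator)
  then show ?thesis
    unfolding ball .
qed

lemma nn_integral_truncated_kernel_le_series:
  fixes x :: "'a::euclidean_space"
  assumes s: "0 < s" "s < 1"
  defines "N \<equiv> real DIM('a)" and "\<omega> \<equiv> unit_ball_vol (real DIM('a))"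
  shows "(\<integral>\<^sup>+y. ennreal (truncated_kernel (N + 2 * s) (x - y)) \<partial>lborel)
    \<le> (\<Sum>j. ennreal (\<omega> * 2 powr N * (2 powr (- 2 * s)) ^ j))
      + (\<Sum>j. ennreal (\<omega> * 2 powr (2 * N) * (2 powr (- (2 - 2 * s))) ^ j))"
proof -
  have [measurable]: "ball x \<rho> \<in> sets borel" for \<rho>
    by simp
  have far: "2 powr (- real j * (N + 2 * s)) * (\<omega> * (2 powr (real j + 1)) ^ DIM('a))
      = \<omega> * 2 powr N * (2 powr (- 2 * s)) ^ j" for j
    unfolding N_def by (simp add: powr_power powr_add[symmetric] algebra_simps)
  have near: "2 powr (- real j * (2 - 2 * s)) * 2 powr ((real j + 1) * N) * (\<omega> * (2 powr (1 - real j)) ^ DIM('a))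
      = \<omega> * 2 powr (2 * N) * (2 powr (- (2 - 2 * s))) ^ j" for j
    unfolding N_def by (simp add: powr_power powr_add[symmetric] algebra_simps)
  have "(\<integral>\<^sup>+y. ennreal (truncated_kernel (N + 2 * s) (x - y)) \<partial>lborel)
     \<le> (\<integral>\<^sup>+y. (\<Sum>j. ennreal (2 powr (- real j * (N + 2 * s))) * indicator (ball x (2 powr (real j + 1))) y)
          + (\<Sum>j. ennreal (2 powr (- real j * (2 - 2 * s)) * 2 powr ((real j + 1) * N))
               * indicator (ball x (2 powr (1 - real j))) y) \<partial>lborel)"
  proof (intro nn_integral_mono)
    fix y
    have "indicator (ball 0 r) (x - y) = (indicator (ball x r) y :: ennreal)" for r
      by (simp add: indicator_def dist_norm norm_minus_commute)
    then show "ennreal (truncated_kernel (N + 2 * s) (x - y))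
        \<le> (\<Sum>j. ennreal (2 powr (- real j * (N + 2 * s))) * indicator (ball x (2 powr (real j + 1))) y)
          + (\<Sum>j. ennreal (2 powr (- real j * (2 - 2 * s)) * 2 powr ((real j + 1) * N))
               * indicator (ball x (2 powr (1 - real j))) y)"
      using truncated_kernel_le_dyadic_sums[OF s, of "x - y"] unfolding N_def by simp
  qed
  also have "\<dots> = (\<integral>\<^sup>+y. (\<Sum>j. ennreal (2 powr (- real j * (N + 2 * s)))
            * indicator (ball x (2 powr (real j + 1))) y) \<partial>lborel)
      + (\<integral>\<^sup>+y. (\<Sum>j. ennreal (2 powr (- real j * (2 - 2 * s)) * 2 powr ((real j + 1) * N))
            * indicator (ball x (2 powr (1 - real j))) y) \<partial>lborel)"
    by (intro nn_integral_add) measurable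
  also have "\<dots> = (\<Sum>j. ennreal (\<omega> * 2 powr N * (2 powr (- 2 * s)) ^ j))
      + (\<Sum>j. ennreal (\<omega> * 2 powr (2 * N) * (2 powr (- (2 - 2 * s))) ^ j))"
    using nn_integral_ball_series[of "\<lambda>j. 2 powr (- real j * (N + 2 * s))" "\<lambda>j. 2 powr (real j + 1)" x]
      nn_integral_ball_series[of "\<lambda>j. 2 powr (- real j * (2 - 2 * s)) * 2 powr ((real j + 1) * N)"
        "\<lambda>j. 2 powr (1 - real j)" x]
    unfolding \<omega>_def[symmetric] unfolding N_def[symmetric] far near by simp
  finally show ?thesis .
qed

lemma truncated_kernel_integral_bounded:
  assumes s: "0 < s" "s < 1"
  shows "\<exists>K. \<forall>x::'a::euclidean_space.
    (\<integral>\<^sup>+y. ennreal (truncated_kernel (real DIM('a) + 2 * s) (x - y)) \<partial>lborel) \<le> ennreal K"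
proof -
  define N where "N = real DIM('a)"
  define \<omega> where "\<omega> = unit_ball_vol (real DIM('a))"
  define r1 where "r1 = 2 powr (- 2 * s)"
  define r2 where "r2 = 2 powr (- (2 - 2 * s))"
  have \<omega>: "\<omega> > 0"
    unfolding \<omega>_def by simp
  have r1: "0 \<le> r1" "r1 < 1" and r2: "0 \<le> r2" "r2 < 1"
    unfolding r1_def r2_def using s powr_less_mono[of "- 2 * s" 0 2]
      powr_less_mono[of "- (2 - 2 * s)" 0 2] by auto
  show ?thesis
  proof (intro exI allI)
    fix x :: 'a
    have "(\<integral>\<^sup>+y. ennreal (truncated_kernel (N + 2 * s) (x - y)) \<partial>lborel)
        \<le> (\<Sum>j. ennreal (\<omega> * 2 powr N * r1 ^ j)) + (\<Sum>j. ennreal (\<omega> * 2 powr (2 * N) * r2 ^ j))"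
      using nn_integral_truncated_kernel_le_series[OF s, of x] unfolding N_def \<omega>_def r1_def r2_def .
    also have "\<dots> = ennreal (\<omega> * 2 powr N / (1 - r1)) + ennreal (\<omega> * 2 powr (2 * N) / (1 - r2))"
      using suminf_ennreal_geometric[OF r1, of "\<omega> * 2 powr N"]
        suminf_ennreal_geometric[OF r2, of "\<omega> * 2 powr (2 * N)"] \<omega> by simp
    also have "\<dots> = ennreal (\<omega> * 2 powr N / (1 - r1) + \<omega> * 2 powr (2 * N) / (1 - r2))"
      using \<omega> r1 r2 by (simp add: ennreal_plus[symmetric] del: ennreal_plus)
    finally show "(\<integral>\<^sup>+y. ennreal (truncated_kernel (real DIM('a) + 2 * s) (x - y)) \<partial>lborel)
        \<le> ennreal (\<omega> * 2 powr N / (1 - r1) + \<omega> * 2 powr (2 * N) / (1 - r2))"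
      unfolding N_def .
  qed
qed

lemma nn_integral_truncated_kernel_strip_le:
  fixes B :: "'a::euclidean_space set"
  assumes K: "\<And>x::'a. (\<integral>\<^sup>+y. ennreal (truncated_kernel e (x - y)) \<partial>lborel) \<le> ennreal K"
    and [measurable]: "B \<in> sets borel"
  shows "(\<integral>\<^sup>+z. ennreal (truncated_kernel e (fst z - snd z)) * indicator B (fst z) \<partial>(lborel \<Otimes>\<^sub>M lborel))
      \<le> ennreal K * emeasure lborel B"
    and "(\<integral>\<^sup>+z. ennreal (truncated_kernel e (fst z - snd z)) * indicator B (snd z) \<partial>(lborel \<Otimes>\<^sub>M lborel))
      \<le> ennreal K * emeasure lborel B"
proof -
  have "(\<integral>\<^sup>+z. ennreal (truncated_kernel e (fst z - snd z)) * indicator B (fst z) \<partial>(lborel \<Otimes>\<^sub>M lborel))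
      = (\<integral>\<^sup>+x. (\<integral>\<^sup>+y. ennreal (truncated_kernel e (x - y)) \<partial>lborel) * indicator B x \<partial>lborel)"
    by (subst lborel.nn_integral_fst[symmetric]) (auto simp: nn_integral_multc)
  also have "\<dots> \<le> (\<integral>\<^sup>+x. ennreal K * indicator B x \<partial>lborel)"
    by (intro nn_integral_mono mult_right_mono K) simp
  also have "\<dots> = ennreal K * emeasure lborel B"
    by (rule nn_integral_cmult_indicator) simp
  finally show "(\<integral>\<^sup>+z. ennreal (truncated_kernel e (fst z - snd z)) * indicator B (fst z) \<partial>(lborel \<Otimes>\<^sub>M lborel))
      \<le> ennreal K * emeasure lborel B" .
  have "(\<integral>\<^sup>+z. ennreal (truncated_kernel e (fst z - snd z)) * indicator B (snd z) \<partial>(lborel \<Otimes>\<^sub>M lborel))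
      = (\<integral>\<^sup>+y. (\<integral>\<^sup>+x. ennreal (truncated_kernel e (y - x)) \<partial>lborel) * indicator B y \<partial>lborel)"
    by (subst lborel_pair.nn_integral_snd[symmetric])
      (auto simp: nn_integral_multc truncated_kernel_def norm_minus_commute)
  also have "\<dots> \<le> (\<integral>\<^sup>+y. ennreal K * indicator B y \<partial>lborel)"
    by (intro nn_integral_mono mult_right_mono K) simp
  also have "\<dots> = ennreal K * emeasure lborel B"
    by (rule nn_integral_cmult_indicator) simp
  finally show "(\<integral>\<^sup>+z. ennreal (truncated_kernel e (fst z - snd z)) * indicator B (snd z) \<partial>(lborel \<Otimes>\<^sub>M lborel))
      \<le> ennreal K * emeasure lborel B" .
qed

lemma lipschitz_bounded_support_in_Hs:
  fixes u :: "'a::euclidean_space \<Rightarrow> real"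
  assumes s: "0 < s" "s < 1" and [measurable]: "u \<in> borel_measurable lborel"
    and range: "\<And>x. 0 \<le> u x \<and> u x \<le> 1" and lip: "\<And>x y. \<bar>u x - u y\<bar> \<le> norm (x - y)"
    and supp: "\<And>x. x \<notin> B \<Longrightarrow> u x = 0" and [measurable]: "B \<in> sets borel"
    and B: "emeasure lborel B < \<infinity>"
  shows "u \<in> Hs s"
proof -
  define e where "e = real DIM('a) + 2 * s"
  obtain K where K: "\<And>x::'a. (\<integral>\<^sup>+y. ennreal (truncated_kernel e (x - y)) \<partial>lborel) \<le> ennreal K"
    using truncated_kernel_integral_bounded[OF s] unfolding e_def by blast
  have "(\<integral>\<^sup>+x. ennreal ((u x)\<^sup>2) \<partial>lborel) \<le> (\<integral>\<^sup>+x. indicator B x \<partial>lborel)"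
    using range supp by (intro nn_integral_mono) (auto simp: indicator_def power_le_one)
  then have L2: "(\<integral>\<^sup>+x. ennreal ((u x)\<^sup>2) \<partial>lborel) < \<infinity>"
    using B by (simp add: le_less_trans)
  have pointwise: "ennreal ((u x - u y)\<^sup>2 / norm (x - y) powr e)
      \<le> ennreal (truncated_kernel e (x - y)) * indicator B x
        + ennreal (truncated_kernel e (x - y)) * indicator B y" for x y
  proof (cases "x \<in> B \<or> y \<in> B")
    case True
    have "(u x - u y)\<^sup>2 \<le> 1" "(u x - u y)\<^sup>2 \<le> (norm (x - y))\<^sup>2"
      using range[of x] range[of y] lip[of x y] by (auto simp: abs_square_le_1 abs_le_square_iff[symmetric])
    then have "(u x - u y)\<^sup>2 / norm (x - y) powr e \<le> truncated_kernel e (x - y)"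
      unfolding truncated_kernel_def by (intro divide_right_mono) auto
    then have "ennreal ((u x - u y)\<^sup>2 / norm (x - y) powr e) \<le> ennreal (truncated_kernel e (x - y))"
      by (rule ennreal_leI)
    then show ?thesis
      using True by (cases "x \<in> B") (auto simp: indicator_def intro: add_increasing add_increasing2)
  qed (use supp in simp)
  have "(\<integral>\<^sup>+ z. ennreal ((u (fst z) - u (snd z))\<^sup>2 / norm (fst z - snd z) powr e) \<partial>(lborel \<Otimes>\<^sub>M lborel))
      \<le> (\<integral>\<^sup>+ z. ennreal (truncated_kernel e (fst z - snd z)) * indicator B (fst z)
          + ennreal (truncated_kernel e (fst z - snd z)) * indicator B (snd z) \<partial>(lborel \<Otimes>\<^sub>M lborel))"
    using pointwise by (intro nn_integral_mono) auto
  also have "\<dots> \<le> ennreal K * emeasure lborel B + ennreal K * emeasure lborel B"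
    using nn_integral_truncated_kernel_strip_le[OF K] by (subst nn_integral_add) (auto intro: add_mono)
  also have "\<dots> < \<infinity>"
    using B by (simp add: ennreal_mult_less_top ennreal_add_eq_top less_top)
  finally show ?thesis
    unfolding Hs_def hs_norm_sq_def e_def[symmetric] using L2 by simp
qed

lemma not_AE_on_ball:
  fixes P :: "'a::euclidean_space \<Rightarrow> bool"
  assumes "r > 0" "\<And>x. x \<in> ball c r \<Longrightarrow> \<not> P x"
  shows "\<not> (AE x in lborel. P x)"
proof
  assume "AE x in lborel. P x"
  moreover have "AE x in lborel. P x \<longrightarrow> x \<notin> ball c r"
    using assms(2) by (intro AE_I2) auto
  ultimately have "AE x in lborel. x \<notin> ball c r"
    by (rule AE_mp)
  then have "emeasure lborel {x \<in> space lborel. x \<in> ball c r} = 0"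
    by (rule emeasure_eq_0_AE)
  moreover have "{x \<in> space lborel. x \<in> ball c r} = ball c r"
    by auto
  ultimately have "emeasure lborel (ball c r) = 0"
    by simp
  then show False
    using assms(1) unit_ball_vol_pos[of "real DIM('a)"] by (simp add: emeasure_ball)
qed

lemma Sigma_plus_nonempty:
  assumes s: "0 < s" "s < 1"
  shows "Sigma_plus s \<noteq> ({} :: ('a::euclidean_space \<Rightarrow> real) set)"
proof -
  define u where "u = (\<lambda>x::'a. max 0 (1 - norm x))"
  have [measurable]: "u \<in> borel_measurable lborel"
    unfolding u_def by measurable
  have pos: "u x > 0" if "x \<in> ball 0 1" for x
    using that unfolding u_def by auto
  have "\<bar>u x - u y\<bar> \<le> norm (x - y)" for x y
    using norm_triangle_ineq3[of x y] unfolding u_def by (auto simp: max_def)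
  then have u: "u \<in> Hs s"
    using s emeasure_lborel_ball_finite[of "0::'a" 1]
    by (intro lipschitz_bounded_support_in_Hs[where B = "ball 0 1"]) (auto simp: u_def)
  have "hs_norm s u \<noteq> 0"
  proof
    assume "hs_norm s u = 0"
    then have "hs_norm_sq s u = 0"
      using u unfolding hs_norm_def Hs_def by (auto simp: enn2real_eq_0_iff)
    then have "AE x in lborel. ennreal ((u x)\<^sup>2) = 0"
      unfolding hs_norm_sq_def by (simp add: nn_integral_0_iff_AE)
    moreover have "\<not> (AE x in lborel. ennreal ((u x)\<^sup>2) = 0)"
      using pos by (intro not_AE_on_ball[where c = 0 and r = 1]) force+
    ultimately show False
      by simp
  qed
  then have n: "hs_norm s u > 0"
    using hs_norm_nonneg[of s u] by simp
  define v where "v = (\<lambda>x. (1 / hs_norm s u) * u x)"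
  have "v \<in> Hs s" "hs_norm s v = 1"
    unfolding v_def using Hs_scale[OF u, of "1 / hs_norm s u"] hs_norm_scale[OF u, of "1 / hs_norm s u"] n
    by (auto simp del: divide_const_simps)
  moreover have "\<not> (AE x in lborel. max (v x) 0 = 0)"
    using pos n by (intro not_AE_on_ball[where c = 0 and r = 1]) (force simp: v_def)+
  ultimately have "v \<in> Sigma_plus s"
    unfolding Sigma_plus_def by auto
  then show ?thesis
    by auto
qed

section \<open>Uniform positivity of J\<close>

lemma pos_power_integral_bounds:
  fixes b v :: "'a::euclidean_space \<Rightarrow> real"
  assumes [measurable]: "b \<in> borel_measurable lborel" and b: "\<And>x. 0 < b x \<and> b x \<le> 1"
    and v: "v \<in> Sigma_plus s" and q: "q > 0" and S: "S \<ge> 0"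
    and Lq: "(\<integral>\<^sup>+x. ennreal ((max (v x) 0) powr q) \<partial>lborel) \<le> ennreal S"
  shows "0 < pos_power_integral b q v" "pos_power_integral b q v \<le> S"
proof -
  have [measurable]: "v \<in> borel_measurable lborel"
    using v unfolding Sigma_plus_def Hs_def by auto
  define f where "f = (\<lambda>x. b x * (max (v x) 0) powr q)"
  have [measurable]: "f \<in> borel_measurable lborel"
    unfolding f_def by measurable
  have b0: "b x \<ge> 0" for x
    using b[of x] by simp
  have f0: "f x \<ge> 0" for x
    unfolding f_def using b0[of x] by simp
  have "(\<integral>\<^sup>+x. ennreal (f x) \<partial>lborel) \<le> (\<integral>\<^sup>+x. ennreal ((max (v x) 0) powr q) \<partial>lborel)"
    unfolding f_def using b b0 by (intro nn_integral_mono ennreal_leI mult_left_le_one_le) auto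
  then have nn: "(\<integral>\<^sup>+x. ennreal (f x) \<partial>lborel) \<le> ennreal S"
    using Lq by (rule order_trans)
  then have int: "integrable lborel f"
    using f0 by (intro integrableI_bounded) (auto simp: le_less_trans)
  have "ennreal (\<integral>x. f x \<partial>lborel) \<le> ennreal S"
    using nn by (subst (asm) nn_integral_eq_integral[OF int]) (auto simp: f0)
  moreover have I0: "(\<integral>x. f x \<partial>lborel) \<ge> 0"
    using f0 by (intro integral_nonneg_AE) auto
  ultimately show "pos_power_integral b q v \<le> S"
    unfolding pos_power_integral_def f_def[symmetric] using S by simp
  have "(\<integral>x. f x \<partial>lborel) \<noteq> 0"
  proof
    assume "(\<integral>x. f x \<partial>lborel) = 0"
    then have "AE x in lborel. f x = 0"
      using integral_nonneg_eq_0_iff_AE[OF int] f0 by simp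
    moreover have "f x = 0 \<Longrightarrow> max (v x) 0 = 0" for x
      unfolding f_def using b[of x] q by auto
    ultimately have "AE x in lborel. max (v x) 0 = 0"
      by auto
    then show False
      using v unfolding Sigma_plus_def by auto
  qed
  then show "0 < pos_power_integral b q v"
    unfolding pos_power_integral_def f_def[symmetric] using I0 by simp
qed

lemma INF_J_fun_pos:
  fixes b :: "'a::euclidean_space \<Rightarrow> real"
  assumes p: "p > 1" and ne: "Sigma_plus s \<noteq> ({} :: ('a \<Rightarrow> real) set)" and S: "S > 0"
    and A: "\<And>v. v \<in> Sigma_plus s \<Longrightarrow> 0 < pos_power_integral b (p + 1) v \<and> pos_power_integral b (p + 1) v \<le> S"
  shows "\<exists>d>0. \<forall>g\<in>Hminus s. hminus_norm s g \<le> d \<longrightarrow> (INF v\<in>Sigma_plus s. J_fun s p b g v) > 0"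
proof -
  define c where "c = (1 / 2) powr ((p + 1) / (p - 1)) * ray_sup (p + 1) S"
  have c: "c > 0"
    unfolding c_def using ray_sup_pos[OF S, of "p + 1"] p by simp
  show ?thesis
  proof (intro exI conjI ballI impI)
    show "sqrt (c / 2) > 0"
      using c by simp
    fix g :: "('a \<Rightarrow> real) \<Rightarrow> real"
    assume g: "g \<in> Hminus s" and small: "hminus_norm s g \<le> sqrt (c / 2)"
    have "(hminus_norm s g)\<^sup>2 \<le> (sqrt (c / 2))\<^sup>2"
      using small hminus_norm_nonneg[OF g] by (rule power_mono)
    then have small_sq: "(hminus_norm s g)\<^sup>2 \<le> c / 2"
      using c by simp
    have "c / 2 \<le> J_fun s p b g v" if v: "v \<in> Sigma_plus s" for v
    proof -
      have vH: "v \<in> Hs s" "hs_norm s v = 1" and Av: "0 < pos_power_integral b (p + 1) v"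
          "pos_power_integral b (p + 1) v \<le> S"
        using v A unfolding Sigma_plus_def by auto
      have "c \<le> (1 / 2) powr ((p + 1) / (p - 1)) * J_fun s p b (\<lambda>_. 0) v"
        unfolding c_def J_fun_zero_eq[OF vH p Av(1)]
        using ray_sup_antimono[OF Av, of "p + 1"] p by (intro mult_left_mono) auto
      then show ?thesis
        using J_fun_lower_bound[OF g vH p Av(1), of "1 / 2"] small_sq by simp
    qed
    then have "c / 2 \<le> (INF v\<in>Sigma_plus s. J_fun s p b g v)"
      using ne by (intro cINF_greatest) auto
    then show "(INF v\<in>Sigma_plus s. J_fun s p b g v) > 0"
      using c by linarith
  qed
qed

theorem lemma4p1:
  fixes s p :: real and a :: "'a::euclidean_space \<Rightarrow> real"
    and f :: "('a \<Rightarrow> real) \<Rightarrow> real"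
  assumes s: "0 < s" "s < 1"
    and N: "real DIM('a) > 2 * s"
    and p: "1 < p" "p < (real DIM('a) + 2 * s) / (real DIM('a) - 2 * s)"
    and a_meas: "a \<in> borel_measurable lborel"
    and a_range: "\<forall>x. 0 < a x \<and> a x \<le> 1"
    and a_inf: "(INF x. a x) > 0"
    and a_ne1: "emeasure lborel {x. a x \<noteq> 1} > 0"
    and a_lim: "(a \<longlongrightarrow> 1) at_infinity"
    and f: "f \<in> Hminus s" "nonneg_functional s f"
  shows
    "(\<forall>u\<in>Hs s. \<forall>\<epsilon>\<in>{0<..<1::real}.
        (1 - \<epsilon>) * I_fun s p (\<lambda>x. a x / (1 - \<epsilon>)) (\<lambda>_. 0) u
          - 1 / (2 * \<epsilon>) * (hminus_norm s f)\<^sup>2 \<le> I_fun s p a f u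
      \<and> I_fun s p a f u \<le> (1 + \<epsilon>) * I_fun s p (\<lambda>x. a x / (1 + \<epsilon>)) (\<lambda>_. 0) u
          + 1 / (2 * \<epsilon>) * (hminus_norm s f)\<^sup>2)
   \<and> (\<forall>v\<in>Sigma_plus s. \<forall>\<epsilon>\<in>{0<..<1::real}.
        (1 - \<epsilon>) powr ((p + 1) / (p - 1)) * J_fun s p a (\<lambda>_. 0) v
          - 1 / (2 * \<epsilon>) * (hminus_norm s f)\<^sup>2 \<le> J_fun s p a f v
      \<and> J_fun s p a f v \<le> (1 + \<epsilon>) powr ((p + 1) / (p - 1)) * J_fun s p a (\<lambda>_. 0) v
          + 1 / (2 * \<epsilon>) * (hminus_norm s f)\<^sup>2)
   \<and> (\<exists>d0>0. \<forall>g\<in>Hminus s. nonneg_functional s g \<longrightarrow> hminus_norm s g \<le> d0 \<longrightarrow>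
        (INF v\<in>Sigma_plus s. J_fun s p a g v) > 0)"
proof -
  have "p + 1 < 2 * real DIM('a) / (real DIM('a) - 2 * s)"
    using p(2) N by (simp add: field_simps)
  then obtain S where S: "S > 0" and Lq: "\<And>u::'a \<Rightarrow> real. u \<in> Hs s \<Longrightarrow> hs_norm_sq s u \<le> 1 \<Longrightarrow>
      (\<integral>\<^sup>+x. ennreal ((max (u x) 0) powr (p + 1)) \<partial>lborel) \<le> ennreal S"
    using Hs_pos_part_Lq_bound[OF s(1) N, of "p + 1"] p(1) by auto
  have A: "0 < pos_power_integral a (p + 1) v \<and> pos_power_integral a (p + 1) v \<le> S"
    if v: "v \<in> Sigma_plus s" for v
  proof -
    have "v \<in> Hs s" "hs_norm_sq s v = 1"
      using v hs_norm_sq_eq_1 unfolding Sigma_plus_def by auto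
    then show ?thesis
      using pos_power_integral_bounds[OF a_meas _ v _ _ Lq] a_range p(1) S by auto
  qed
  have unit: "v \<in> Hs s" "hs_norm s v = 1" if "v \<in> Sigma_plus s" for v
    using that unfolding Sigma_plus_def by auto
  show ?thesis
    using I_fun_bounds[OF f(1)] J_fun_lower_bound[OF f(1) unit p(1) conjunct1[OF A]]
      J_fun_upper_bound[OF f(1) unit p(1) conjunct1[OF A]]
      INF_J_fun_pos[OF p(1) Sigma_plus_nonempty[OF s] S A]
    by auto
qed

end
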